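(* Let $q\in(0,1/2)$ and $\gamma\in[0,1]$. If $q''>q$ (intermittent selfish mining is more profitable than honest mining), then $q''<q'$ (selfish mining is more profitable than intermittent selfish mining).
   Context: Here $p=1-q$, and $$\delta=\frac{(1+pq)(p-q)+pq}{p^2q+p-q},\qquad q'=\frac{((1+pq)(p-q)+pq)q-(1-\gamma)p^2q(p-q)}{p^2q+p-q},\qquad q''=\frac{q+q'}{\delta+1/\delta}.$$ These are respectively the mean difficulty parameter, the apparent hashrate of selfish mining, and the apparent hashrate of intermittent selfish mining. A strategy is more profitable than another when its apparent hashrate (long-run revenue ratio divided by $b/\tau_0$) is larger. Honest mining has apparent hashrate $q$. *)

theory Defs
  imports Complex_Main
begin

text \<open>Here p = 1 - q. Mean difficulty parameter delta, apparent hashrate of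
selfish mining q' (sm_rate) and of intermittent selfish mining q'' (ism_rate).\<close>

definition delta :: "real \<Rightarrow> real" where
  "delta q = (let p = 1 - q in
     ((1 + p*q)*(p - q) + p*q) / (p^2*q + p - q))"

definition sm_rate :: "real \<Rightarrow> real \<Rightarrow> real" where
  "sm_rate q \<gamma> = (let p = 1 - q in
     (((1 + p*q)*(p - q) + p*q)*q - (1 - \<gamma>)*p^2*q*(p - q)) / (p^2*q + p - q))"

definition ism_rate :: "real \<Rightarrow> real \<Rightarrow> real" where
  "ism_rate q \<gamma> = (q + sm_rate q \<gamma>) / (delta q + 1 / delta q)"

end

theory Submission
  imports Defs
begin

text \<open>The denominator of q'' is \<delta> + 1/\<delta> \<ge> 2 because \<delta> > 0, so q'' is at most the
midpoint of q and q'. If q'' exceeds q, the midpoint does too, which forces q' > q and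
places q'' strictly below q'.\<close>

lemma add_divide_self_ge_two:
  fixes d :: real
  assumes "0 < d"
  shows "2 \<le> d + 1 / d"
proof -
  have "2 * d \<le> d * d + 1"
    using sum_squares_ge_zero[of "d - 1" 0] by (simp add: algebra_simps)
  then show ?thesis
    using assms by (simp add: field_simps)
qed

lemma delta_pos:
  assumes "0 < q" and "q < 1/2"
  shows "0 < delta q"
proof -
  define p where "p = 1 - q"
  have "q < p" "0 < p"
    using assms by (auto simp: p_def)
  then have "0 < (1 + p*q)*(p - q) + p*q" and "0 < p^2*q + (p - q)"
    using \<open>0 < q\<close> by (auto intro!: add_pos_pos mult_pos_pos)
  then show ?thesis
    unfolding delta_def Let_def p_def[symmetric] by (simp add: add_diff_eq)
qed

lemma divide_sum_lt_right:
  fixes q s c :: real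
  assumes "0 \<le> q" and "2 \<le> c" and "q < (q + s) / c"
  shows "(q + s) / c < s"
proof -
  define x where "x = (q + s) / c"
  have "s = c * x - q"
    using assms(2) by (simp add: x_def field_simps)
  moreover have "0 \<le> x" "q < x"
    using assms by (simp_all add: x_def)
  ultimately have "x < s"
    using assms(2) mult_right_mono[OF assms(2) \<open>0 \<le> x\<close>] by linarith
  then show ?thesis
    by (simp add: x_def)
qed

theorem mainTheorem9:
  fixes q \<gamma> :: real
  assumes "0 < q" and "q < 1/2" and "0 \<le> \<gamma>" and "\<gamma> \<le> 1"
    and "ism_rate q \<gamma> > q"
  shows "ism_rate q \<gamma> < sm_rate q \<gamma>"
proof -
  have "2 \<le> delta q + 1 / delta q"
    using add_divide_self_ge_two delta_pos assms(1,2) by blast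
  then show ?thesis
    using divide_sum_lt_right[of q] assms(1,5) unfolding ism_rate_def by simp
qed

end
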